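(* Let $n,q\ge1$ and let $c_1,c_2$ be integers with $c_1+c_2=-2$. If there exist a $PComS(n,q,c_1)$ and a $PComS(n,q,c_2)$, then there exists a partial Hadamard matrix $PH(2n\times 2(nq+1))$.
   Context: $\mathbb{Z}_2^n$ is the set of sequences $X=(x_0,\dots,x_{n-1})$ with entries in $\{+1,-1\}$, indices mod $n$. The periodic autocorrelation is $\mathsf{P}_X(k)=\sum_{i=0}^{n-1}x_ix_{i+k}$; it depends only on the cyclic-shift class $X_C$. A $PComS(n,q,c)$ is a list (repetitions allowed) of $q$ cyclic-shift classes $A_{1C},\dots,A_{qC}$ with $A_i\in\mathbb{Z}_2^n$ such that $\sum_{i=1}^q\mathsf{P}_{A_i}(k)=c$ for all $1\le k\le n-1$. A partial Hadamard matrix $PH(k\times m)$ is a $k\times m$ matrix $H$ with all entries in $\{+1,-1\}$ satisfying $HH^{t}=mI_k$. *)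

theory Defs
  imports Main
begin

text \<open>A sequence in Z_2^n is represented by a function x :: nat => int whose entries
  x 0, ..., x (n-1) lie in {1,-1}; indices are taken mod n.\<close>

definition pm1_seq :: "nat \<Rightarrow> (nat \<Rightarrow> int) \<Rightarrow> bool" where
  "pm1_seq n x \<longleftrightarrow> (\<forall>i<n. x i = 1 \<or> x i = -1)"

definition paf :: "nat \<Rightarrow> (nat \<Rightarrow> int) \<Rightarrow> nat \<Rightarrow> int" where
  "paf n x k = (\<Sum>i<n. x i * x ((i + k) mod n))"

text \<open>A PComS(n,q,c): q sequences (each representing its cyclic-shift class;
  the periodic autocorrelation is shift-invariant) whose periodic autocorrelations
  sum to c at every nontrivial shift.\<close>

definition PComS :: "nat \<Rightarrow> nat \<Rightarrow> int \<Rightarrow> (nat \<Rightarrow> int) list \<Rightarrow> bool" where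
  "PComS n q c As \<longleftrightarrow> length As = q \<and> (\<forall>A\<in>set As. pm1_seq n A) \<and>
     (\<forall>k. 1 \<le> k \<and> k \<le> n - 1 \<longrightarrow> (\<Sum>A\<leftarrow>As. paf n A k) = c)"

definition partial_hadamard :: "nat \<Rightarrow> nat \<Rightarrow> (nat \<Rightarrow> nat \<Rightarrow> int) \<Rightarrow> bool" where
  "partial_hadamard k m H \<longleftrightarrow>
     (\<forall>i<k. \<forall>j<m. H i j = 1 \<or> H i j = -1) \<and>
     (\<forall>i<k. \<forall>i'<k. (\<Sum>j<m. H i j * H i' j) = (if i = i' then int m else 0))"

end

theory Submission
  imports Defs
begin

text \<open>Put circulant blocks of the \<open>A\<^sub>t\<close> and \<open>B\<^sub>t\<close> over reversed circulant blocks of the \<open>B\<^sub>t\<close> and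
  \<open>-A\<^sub>t\<close>, and add a column of ones and a column that is \<open>1\<close> on the top and \<open>-1\<close> on the bottom
  half. Two distinct rows of the same half have inner product \<open>2 + c\<^sub>1 + c\<^sub>2 = 0\<close>, as the blocks
  contribute all periodic autocorrelations at one nonzero shift. For a top row against a bottom
  row, reflecting the summation index shows \<open>\<Sum>\<^sub>s A(s - i) B(r - s) = \<Sum>\<^sub>s B(s - i) A(r - s)\<close>, so
  the two halves of the blocks cancel, and so do the two extra columns.\<close>

definition cyc :: "nat \<Rightarrow> (nat \<Rightarrow> 'a) \<Rightarrow> int \<Rightarrow> 'a" where
  "cyc n x m = x (nat (m mod int n))"

lemma cyc_add_mod [simp]: "cyc n x (m + d mod int n) = cyc n x (m + d)"
  by (simp add: cyc_def mod_add_right_eq)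

lemma paf_eq_sum_cyc: "paf n x k = (\<Sum>i<n. cyc n x (int i) * cyc n x (int i + int k))"
  unfolding paf_def cyc_def by (intro sum.cong refl) (simp flip: of_nat_add of_nat_mod)

lemma pm1_seq_cyc:
  assumes "pm1_seq n x" and "n > 0"
  shows "cyc n x m = 1 \<or> cyc n x m = -1"
  using assms by (simp add: pm1_seq_def cyc_def nat_less_iff)

lemma sum_periodic_shift_one:
  fixes g :: "int \<Rightarrow> 'a::comm_monoid_add"
  assumes periodic: "\<And>m. g (m mod int n) = g m"
  shows "(\<Sum>s<n. g (int s + 1)) = (\<Sum>s<n. g (int s))"
proof (cases n)
  case (Suc p)
  have "(\<Sum>s<n. g (int s + 1)) = (\<Sum>s<p. g (int (Suc s))) + g (int n)"
    unfolding Suc sum.lessThan_Suc by (simp add: add.commute)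
  also have "\<dots> = g 0 + (\<Sum>s<p. g (int (Suc s)))"
    using periodic[of "int n"] periodic[of 0] by (simp add: add.commute)
  also have "\<dots> = (\<Sum>s<n. g (int s))"
    unfolding Suc sum.lessThan_Suc_shift by simp
  finally show ?thesis .
qed simp

lemma sum_periodic_shift:
  fixes g :: "int \<Rightarrow> 'a::comm_monoid_add"
  assumes periodic: "\<And>m. g (m mod int n) = g m"
  shows "(\<Sum>s<n. g (int s + c)) = (\<Sum>s<n. g (int s))"
proof (induction c rule: int_induct[where k = 0])
  case (step1 c)
  have "(\<Sum>s<n. g (int s + (c + 1))) = (\<Sum>s<n. (\<lambda>m. g (m + c)) (int s + 1))"
    by (simp add: ac_simps)
  also have "\<dots> = (\<Sum>s<n. g (int s + c))"
    by (rule sum_periodic_shift_one) (metis periodic mod_add_left_eq)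
  finally show ?case
    using step1 by simp
next
  case (step2 c)
  have "(\<Sum>s<n. g (int s + c)) = (\<Sum>s<n. (\<lambda>m. g (m + (c - 1))) (int s + 1))"
    by (simp add: ac_simps)
  also have "\<dots> = (\<Sum>s<n. g (int s + (c - 1)))"
    by (rule sum_periodic_shift_one) (metis periodic mod_add_left_eq)
  finally show ?case
    using step2 by simp
qed simp

lemma sum_periodic_reflect:
  fixes g :: "int \<Rightarrow> 'a::comm_monoid_add"
  assumes periodic: "\<And>m. g (m mod int n) = g m"
  shows "(\<Sum>s<n. g (c - int s)) = (\<Sum>s<n. g (int s))"
proof -
  have "(\<Sum>s<n. g (c - int s)) = (\<Sum>s<n. g (c - int (n - Suc s)))"
    by (rule sum.nat_diff_reindex[symmetric])
  also have "\<dots> = (\<Sum>s<n. g (int s + (c + 1 - int n)))"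
    by (intro sum.cong refl) (simp add: algebra_simps)
  also have "\<dots> = (\<Sum>s<n. g (int s))"
    using periodic by (rule sum_periodic_shift)
  finally show ?thesis .
qed

lemma sum_cyc_mult_shift:
  assumes "n > 0"
  shows "(\<Sum>s<n. cyc n x (int s - a) * cyc n x (int s - b)) = paf n x (nat ((a - b) mod int n))"
proof -
  have "(\<Sum>s<n. cyc n x (int s - a) * cyc n x (int s - b))
      = (\<Sum>s<n. cyc n x (int s + a - a) * cyc n x (int s + a - b))"
    by (rule sum_periodic_shift[symmetric]) (simp add: cyc_def mod_simps)
  also have "\<dots> = (\<Sum>s<n. cyc n x (int s) * cyc n x (int s + (a - b) mod int n))"
    by (simp add: algebra_simps)
  also have "\<dots> = paf n x (nat ((a - b) mod int n))"
    using assms by (simp add: paf_eq_sum_cyc)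
  finally show ?thesis .
qed

lemma sum_cyc_mult_reflect:
  assumes "n > 0"
  shows "(\<Sum>s<n. cyc n x (a - int s) * cyc n x (b - int s)) = paf n x (nat ((b - a) mod int n))"
proof -
  let ?g = "\<lambda>m. cyc n x (m - - a) * cyc n x (m - - b)"
  have "(\<Sum>s<n. cyc n x (a - int s) * cyc n x (b - int s)) = (\<Sum>s<n. ?g (0 - int s))"
    by simp
  also have "\<dots> = (\<Sum>s<n. ?g (int s))"
    by (rule sum_periodic_reflect) (simp add: cyc_def mod_simps)
  also have "\<dots> = paf n x (nat ((b - a) mod int n))"
    using sum_cyc_mult_shift[OF assms, of x "- a" "- b"] by simp
  finally show ?thesis .
qed

lemma sum_cyc_mult_cross:
  fixes x y :: "nat \<Rightarrow> 'a::comm_semiring_0"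
  shows "(\<Sum>s<n. cyc n x (int s - a) * cyc n y (b - int s))
       = (\<Sum>s<n. cyc n y (int s - a) * cyc n x (b - int s))"
proof -
  \<comment> \<open>the substitution \<open>s \<mapsto> a + b - s\<close> exchanges the two factors\<close>
  let ?g = "\<lambda>m. cyc n y (m - a) * cyc n x (b - m)"
  have "(\<Sum>s<n. cyc n x (int s - a) * cyc n y (b - int s)) = (\<Sum>s<n. ?g (a + b - int s))"
    by (intro sum.cong refl) (simp add: mult.commute)
  also have "\<dots> = (\<Sum>s<n. ?g (int s))"
    by (rule sum_periodic_reflect) (simp add: cyc_def mod_simps)
  finally show ?thesis .
qed

lemma PComS_pm1_seq_nth:
  assumes "PComS n q c As" and "t < q"
  shows "pm1_seq n (As ! t)"
  using assms by (auto simp: PComS_def)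

lemma PComS_sum_paf:
  assumes "PComS n q c As" and "1 \<le> k" and "k \<le> n - 1"
  shows "(\<Sum>t<q. paf n (As ! t) k) = c"
proof -
  have "(\<Sum>t<q. paf n (As ! t) k) = (\<Sum>A\<leftarrow>As. paf n A k)"
    using assms(1) by (simp add: PComS_def sum_list_sum_nth atLeast0LessThan)
  then show ?thesis
    using assms by (simp add: PComS_def)
qed

lemma nat_diff_mod_bounds:
  assumes "i < n" and "i' < n" and "i \<noteq> i'"
  shows "1 \<le> nat ((int i - int i') mod int n)" and "nat ((int i - int i') mod int n) \<le> n - 1"
proof -
  have "(int i - int i') mod int n \<noteq> 0"
  proof
    assume "(int i - int i') mod int n = 0"
    then have "int i mod int n = int i' mod int n"
      by (simp add: mod_eq_dvd_iff dvd_eq_mod_eq_0)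
    then show False
      using assms by simp
  qed
  moreover have "0 \<le> (int i - int i') mod int n" and "(int i - int i') mod int n < int n"
    using assms by simp_all
  ultimately show "1 \<le> nat ((int i - int i') mod int n)" and "nat ((int i - int i') mod int n) \<le> n - 1"
    by linarith+
qed

lemma sum_lessThan_add:
  fixes g :: "nat \<Rightarrow> 'a::comm_monoid_add"
  shows "(\<Sum>j<m + n. g j) = (\<Sum>j<m. g j) + (\<Sum>j<n. g (m + j))"
  by (induction n) (simp_all add: add.assoc)

lemma sum_lessThan_mult:
  fixes g :: "nat \<Rightarrow> 'a::comm_monoid_add"
  shows "(\<Sum>j<m * n. g j) = (\<Sum>t<m. \<Sum>s<n. g (t * n + s))"
proof (induction m)
  case (Suc m)
  have "(\<Sum>j<Suc m * n. g j) = (\<Sum>j<m * n + n. g j)"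
    by (simp add: add.commute)
  then show ?case
    using Suc by (simp add: sum_lessThan_add)
qed simp

text \<open>Row \<open>i < n\<close> of \<open>ph_matrix\<close> is \<open>[C(A\<^sub>1) \<dots> C(A\<^sub>q) C(B\<^sub>1) \<dots> C(B\<^sub>q) 1 1]\<close> and row \<open>n + r\<close> is
  \<open>[R(B\<^sub>1) \<dots> R(B\<^sub>q) -R(A\<^sub>1) \<dots> -R(A\<^sub>q) 1 -1]\<close>, where column \<open>s\<close> of the block \<open>C(x)\<close> in row \<open>i\<close>
  is \<open>x (s - i)\<close> and in \<open>R(x)\<close> it is \<open>x (r - s)\<close>, indices mod \<open>n\<close>.\<close>

definition ph_block :: "nat \<Rightarrow> nat \<Rightarrow> (nat \<Rightarrow> int) list \<Rightarrow> (nat \<Rightarrow> int) list \<Rightarrow> nat \<Rightarrow> nat \<Rightarrow> nat \<Rightarrow> int"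
  where "ph_block n q As Bs i t s =
    (if i < n then cyc n (if t < q then As ! t else Bs ! (t - q)) (int s - int i)
     else if t < q then cyc n (Bs ! t) (int (i - n) - int s)
     else - cyc n (As ! (t - q)) (int (i - n) - int s))"

definition ph_matrix :: "nat \<Rightarrow> nat \<Rightarrow> (nat \<Rightarrow> int) list \<Rightarrow> (nat \<Rightarrow> int) list \<Rightarrow> nat \<Rightarrow> nat \<Rightarrow> int"
  where "ph_matrix n q As Bs i j =
    (if j < 2 * q * n then ph_block n q As Bs i (j div n) (j mod n)
     else if j = 2 * q * n then 1
     else if i < n then 1 else -1)"

lemma ph_matrix_row_product:
  assumes "n > 0"
  shows "(\<Sum>j<2 * (n * q + 1). ph_matrix n q As Bs i j * ph_matrix n q As Bs i' j)
    = (\<Sum>t<q. \<Sum>s<n. ph_block n q As Bs i t s * ph_block n q As Bs i' t s)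
      + (\<Sum>t<q. \<Sum>s<n. ph_block n q As Bs i (q + t) s * ph_block n q As Bs i' (q + t) s)
      + 1 + (if (i < n) = (i' < n) then 1 else -1)"
proof -
  let ?H = "\<lambda>j. ph_matrix n q As Bs i j * ph_matrix n q As Bs i' j"
  let ?E = "\<lambda>t s. ph_block n q As Bs i t s * ph_block n q As Bs i' t s"
  have blocks: "?H (t * n + s) = ?E t s" if "t < q + q" "s < n" for t s
  proof -
    have "t * n + s < Suc t * n"
      using that by simp
    also have "\<dots> \<le> 2 * q * n"
      using that by (intro mult_le_mono1) simp
    finally have "t * n + s < 2 * q * n" .
    then show ?thesis
      using that by (simp add: ph_matrix_def)
  qed
  have "2 * (n * q + 1) = Suc (Suc (2 * q * n))"
    by simp
  then have "(\<Sum>j<2 * (n * q + 1). ?H j) = (\<Sum>j<2 * q * n. ?H j) + ?H (2 * q * n) + ?H (Suc (2 * q * n))"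
    by (simp only: sum.lessThan_Suc)
  also have "(\<Sum>j<2 * q * n. ?H j) = (\<Sum>t<q + q. \<Sum>s<n. ?H (t * n + s))"
    by (simp only: mult_2 sum_lessThan_mult)
  also have "\<dots> = (\<Sum>t<q + q. \<Sum>s<n. ?E t s)"
    using blocks by simp
  also have "\<dots> = (\<Sum>t<q. \<Sum>s<n. ?E t s) + (\<Sum>t<q. \<Sum>s<n. ?E (q + t) s)"
    by (rule sum_lessThan_add)
  finally show ?thesis
    by (simp add: ph_matrix_def)
qed

lemma ph_block_pm1:
  assumes "n > 0" and A: "PComS n q c1 As" and B: "PComS n q c2 Bs" and "t < q + q"
  shows "ph_block n q As Bs i t s = 1 \<or> ph_block n q As Bs i t s = -1"
proof -
  have pm1: "cyc n X m = 1 \<or> cyc n X m = -1" if "X = As ! u \<or> X = Bs ! u" "u < q" for X m u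
    using that pm1_seq_cyc[OF _ assms(1)] PComS_pm1_seq_nth[OF A] PComS_pm1_seq_nth[OF B] by blast
  consider "t < q" | "\<not> t < q" "t - q < q"
    using assms(4) by linarith
  then show ?thesis
  proof cases
    case 1
    then show ?thesis
      using pm1[of _ t] by (simp add: ph_block_def)
  next
    case 2
    then show ?thesis
      using pm1[of _ "t - q"] by (auto simp: ph_block_def)
  qed
qed

lemma ph_matrix_pm1:
  assumes "n > 0" and A: "PComS n q c1 As" and B: "PComS n q c2 Bs" and "j < 2 * (n * q + 1)"
  shows "ph_matrix n q As Bs i j = 1 \<or> ph_matrix n q As Bs i j = -1"
proof (cases "j < 2 * q * n")
  case True
  then have "j div n < q + q"
    by (simp add: less_mult_imp_div_less mult_2)
  then show ?thesis
    using True ph_block_pm1[OF assms(1) A B] by (simp add: ph_matrix_def)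
qed (simp add: ph_matrix_def)

lemma ph_matrix_top_rows_orthogonal:
  assumes "n > 0" and A: "PComS n q c1 As" and B: "PComS n q c2 Bs" and "c1 + c2 = -2"
    and "i < n" and "i' < n" and "i \<noteq> i'"
  shows "(\<Sum>j<2 * (n * q + 1). ph_matrix n q As Bs i j * ph_matrix n q As Bs i' j) = 0"
proof -
  define k where "k = nat ((int i - int i') mod int n)"
  have k: "1 \<le> k" "k \<le> n - 1"
    unfolding k_def using nat_diff_mod_bounds assms(5-7) by blast+
  have "(\<Sum>t<q. \<Sum>s<n. ph_block n q As Bs i t s * ph_block n q As Bs i' t s) = (\<Sum>t<q. paf n (As ! t) k)"
    using assms(1,5,6) by (simp add: ph_block_def sum_cyc_mult_shift k_def)
  moreover have "(\<Sum>t<q. \<Sum>s<n. ph_block n q As Bs i (q + t) s * ph_block n q As Bs i' (q + t) s)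
      = (\<Sum>t<q. paf n (Bs ! t) k)"
    using assms(1,5,6) by (simp add: ph_block_def sum_cyc_mult_shift k_def)
  ultimately show ?thesis
    using assms(4-6) PComS_sum_paf[OF A k] PComS_sum_paf[OF B k] ph_matrix_row_product[OF assms(1)]
    by simp
qed

lemma ph_matrix_bottom_rows_orthogonal:
  assumes "n > 0" and A: "PComS n q c1 As" and B: "PComS n q c2 Bs" and "c1 + c2 = -2"
    and "n \<le> i" "i < 2 * n" and "n \<le> i'" "i' < 2 * n" and "i \<noteq> i'"
  shows "(\<Sum>j<2 * (n * q + 1). ph_matrix n q As Bs i j * ph_matrix n q As Bs i' j) = 0"
proof -
  define k where "k = nat ((int (i' - n) - int (i - n)) mod int n)"
  have k: "1 \<le> k" "k \<le> n - 1"
    unfolding k_def using nat_diff_mod_bounds[of "i' - n" n "i - n"] assms(5-9) by auto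
  have "(\<Sum>t<q. \<Sum>s<n. ph_block n q As Bs i t s * ph_block n q As Bs i' t s) = (\<Sum>t<q. paf n (Bs ! t) k)"
    using assms(1,5,7) by (simp add: ph_block_def sum_cyc_mult_reflect k_def)
  moreover have "(\<Sum>t<q. \<Sum>s<n. ph_block n q As Bs i (q + t) s * ph_block n q As Bs i' (q + t) s)
      = (\<Sum>t<q. paf n (As ! t) k)"
    using assms(1,5,7) by (simp add: ph_block_def sum_cyc_mult_reflect k_def)
  ultimately show ?thesis
    using assms(4,5,7) PComS_sum_paf[OF A k] PComS_sum_paf[OF B k] ph_matrix_row_product[OF assms(1)]
    by simp
qed

lemma ph_matrix_top_bottom_rows_orthogonal:
  assumes "n > 0" and "i < n" and "n \<le> i'"
  shows "(\<Sum>j<2 * (n * q + 1). ph_matrix n q As Bs i j * ph_matrix n q As Bs i' j) = 0"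
proof -
  have "(\<Sum>s<n. ph_block n q As Bs i (q + t) s * ph_block n q As Bs i' (q + t) s)
      = - (\<Sum>s<n. ph_block n q As Bs i t s * ph_block n q As Bs i' t s)" if "t < q" for t
    using that assms(2,3) sum_cyc_mult_cross[of n "As ! t" "int i" "Bs ! t" "int (i' - n)"]
    by (simp add: ph_block_def sum_negf)
  then show ?thesis
    using assms ph_matrix_row_product[OF assms(1)] by (simp add: sum_negf)
qed

lemma partial_hadamard_ph_matrix:
  assumes "n > 0" and A: "PComS n q c1 As" and B: "PComS n q c2 Bs" and "c1 + c2 = -2"
  shows "partial_hadamard (2 * n) (2 * (n * q + 1)) (ph_matrix n q As Bs)"
  unfolding partial_hadamard_def
proof (intro conjI allI impI)
  fix i j
  assume "j < 2 * (n * q + 1)"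
  then show "ph_matrix n q As Bs i j = 1 \<or> ph_matrix n q As Bs i j = -1"
    by (rule ph_matrix_pm1[OF assms(1) A B])
next
  fix i i'
  assume i: "i < 2 * n" and i': "i' < 2 * n"
  let ?H = "ph_matrix n q As Bs"
  have "(\<Sum>j<2 * (n * q + 1). ?H i j * ?H i j) = (\<Sum>j<2 * (n * q + 1). 1)"
  proof (intro sum.cong refl)
    fix j
    assume "j \<in> {..<2 * (n * q + 1)}"
    then have "?H i j = 1 \<or> ?H i j = -1"
      using ph_matrix_pm1[OF assms(1) A B] by simp
    then show "?H i j * ?H i j = 1"
      by auto
  qed
  then have diagonal: "(\<Sum>j<2 * (n * q + 1). ?H i j * ?H i j) = int (2 * (n * q + 1))"
    by simp
  show "(\<Sum>j<2 * (n * q + 1). ?H i j * ?H i' j) = (if i = i' then int (2 * (n * q + 1)) else 0)"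
  proof (cases "i = i'")
    case True
    then show ?thesis
      using diagonal by simp
  next
    case False
    have swap: "(\<Sum>j<2 * (n * q + 1). ?H i j * ?H i' j) = (\<Sum>j<2 * (n * q + 1). ?H i' j * ?H i j)"
      by (simp add: mult.commute)
    consider "i < n" "i' < n" | "i < n" "n \<le> i'" | "n \<le> i" "i' < n" | "n \<le> i" "n \<le> i'"
      by linarith
    then show ?thesis
    proof cases
      case 1
      then show ?thesis
        using ph_matrix_top_rows_orthogonal[OF assms 1 False] False by simp
    next
      case 2
      then show ?thesis
        using ph_matrix_top_bottom_rows_orthogonal[OF assms(1) 2] False by simp
    next
      case 3
      then show ?thesis
        using ph_matrix_top_bottom_rows_orthogonal[OF assms(1) 3(2,1)] swap False by simp
    next
      case 4
      then show ?thesis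
        using ph_matrix_bottom_rows_orthogonal[OF assms 4(1) i 4(2) i' False] False by simp
    qed
  qed
qed

theorem theorem21:
  fixes n q :: nat and c1 c2 :: int
  assumes "n \<ge> 1" and "q \<ge> 1" and "c1 + c2 = -2"
    and "\<exists>As. PComS n q c1 As" and "\<exists>Bs. PComS n q c2 Bs"
  shows "\<exists>H. partial_hadamard (2 * n) (2 * (n * q + 1)) H"
proof -
  \<comment> \<open>the construction also works for \<open>q = 0\<close>\<close>
  obtain As Bs where "PComS n q c1 As" and "PComS n q c2 Bs"
    using assms(4,5) by blast
  moreover have "n > 0"
    using assms(1) by simp
  ultimately show ?thesis
    using partial_hadamard_ph_matrix assms(3) by blast
qed

end
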